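(* Let $(\mathbb{K},|\cdot|)$ be an algebraically closed normed field, $f\in\mathbb{K}[z]$ a polynomial of degree $n\ge2$, $\xi\in\mathbb{K}^n$ a root-vector of $f$, $N\ge1$ and $1\le p\le\infty$. Suppose $x^{(0)}\in\mathbb{K}^n$ has pairwise distinct components and $\Psi(E(x^{(0)}))\le2$. Then $f$ has only simple zeros, and the $N$th Weierstrass-type iteration $x^{(k+1)}=T^{(N)}(x^{(k)})$ is well-defined and converges to $\xi$ with error estimates \[ \|x^{(k+1)}-\xi\|\preceq\lambda^{N(N+1)^k}\|x^{(k)}-\xi\|,\qquad \|x^{(k)}-\xi\|\preceq\lambda^{(N+1)^k-1}\|x^{(0)}-\xi\| \] for all $k\ge0$, where $\lambda=\phi(E(x^{(0)}))$. Moreover, if $\Psi(E(x^{(0)}))<2$, the iteration converges to $\xi$ with order of convergence $N+1$.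
   Context: $a_0$ is the leading coefficient of $f$. For $1\le p\le\infty$, $\|x\|_p=(\sum_i|x_i|^p)^{1/p}$ (max-norm if $p=\infty$). For $x\in\mathbb{K}^n$, $\|x\|=(|x_1|,\dots,|x_n|)\in\mathbb{R}^n$ and $\preceq$ is the coordinatewise order on $\mathbb{R}^n$. $d(x)=(d_1(x),\dots,d_n(x))$, $d_i(x)=\min_{j\ne i}|x_i-x_j|$; for $x\in\mathbb{K}^n$, $y\in\mathbb{R}^n$ with nonzero components, $x/y=(|x_1|/y_1,\dots,|x_n|/y_n)$. A root-vector of $f$ is $\xi\in\mathbb{K}^n$ with $f(z)=a_0\prod_i(z-\xi_i)$ for all $z$. $E(x)=\|(x-\xi)/d(x)\|_p$. Weierstrass-type maps: $T^{(0)}(x)=x$ on $D_0=\mathbb{K}^n$; $D_{N+1}=\{x\in D_N: x_i\ne T^{(N)}_j(x)\ \forall i\ne j\}$, and for $x\in D_{N+1}$, $T^{(N+1)}_i(x)=x_i-\dfrac{f(x_i)}{a_0\prod_{j\ne i}(x_i-T^{(N)}_j(x))}$. The iteration is well-defined if $x^{(k)}\in D_N$ for all $k$. $\omega(t)=\left(1+\frac{t}{(n-1)^{1/p}}\right)^{n-1}$ (with $(n-1)^{1/p}=1$ if $p=\infty$), $\Psi(t)=(1+2t)\omega(t)$ for $t\ge0$, $R$ the unique positive solution of $\Psi(t)=2$, and $\phi(t)=\dfrac{\omega(t)-1}{1-2t\omega(t)}$ for $t\in[0,R]$. *)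

theory Defs
  imports "HOL-Computational_Algebra.Polynomial" "HOL-Library.Extended_Real"
begin

definition abs_value :: "('a::field \<Rightarrow> real) \<Rightarrow> bool" where
  "abs_value nv \<longleftrightarrow>
     (\<forall>x. nv x \<ge> 0) \<and> (\<forall>x. nv x = 0 \<longleftrightarrow> x = 0) \<and>
     (\<forall>x y. nv (x * y) = nv x * nv y) \<and> (\<forall>x y. nv (x + y) \<le> nv x + nv y)"

text \<open>Vectors in K^n are functions nat => 'a; only components 0..n-1 matter.\<close>

definition root_vector :: "'a::field poly \<Rightarrow> nat \<Rightarrow> (nat \<Rightarrow> 'a) \<Rightarrow> bool" where
  "root_vector f n \<xi> \<longleftrightarrow> (\<forall>z. poly f z = lead_coeff f * (\<Prod>i<n. (z - \<xi> i)))"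

fun WT :: "'a::field poly \<Rightarrow> nat \<Rightarrow> nat \<Rightarrow> (nat \<Rightarrow> 'a) \<Rightarrow> (nat \<Rightarrow> 'a)" where
  "WT f n 0 x = x"
| "WT f n (Suc N) x =
     (\<lambda>i. x i - poly f (x i) / (lead_coeff f * (\<Prod>j\<in>{..<n} - {i}. (x i - WT f n N x j))))"

fun WD :: "'a::field poly \<Rightarrow> nat \<Rightarrow> nat \<Rightarrow> (nat \<Rightarrow> 'a) set" where
  "WD f n 0 = UNIV"
| "WD f n (Suc N) = {x \<in> WD f n N. \<forall>i<n. \<forall>j<n. i \<noteq> j \<longrightarrow> x i \<noteq> WT f n N x j}"

definition pnorm :: "nat \<Rightarrow> ereal \<Rightarrow> (nat \<Rightarrow> real) \<Rightarrow> real" where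
  "pnorm n p v = (if p = \<infinity> then Max ((\<lambda>i. \<bar>v i\<bar>) ` {..<n})
                  else (\<Sum>i<n. \<bar>v i\<bar> powr real_of_ereal p) powr (1 / real_of_ereal p))"

definition dvec :: "('a \<Rightarrow> real) \<Rightarrow> nat \<Rightarrow> (nat \<Rightarrow> 'a::field) \<Rightarrow> nat \<Rightarrow> real" where
  "dvec nv n x i = Min ((\<lambda>j. nv (x i - x j)) ` ({..<n} - {i}))"

definition Efun :: "('a \<Rightarrow> real) \<Rightarrow> nat \<Rightarrow> ereal \<Rightarrow> (nat \<Rightarrow> 'a::field) \<Rightarrow> (nat \<Rightarrow> 'a) \<Rightarrow> real" where
  "Efun nv n p \<xi> x = pnorm n p (\<lambda>i. nv (x i - \<xi> i) / dvec nv n x i)"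

definition root_p :: "nat \<Rightarrow> ereal \<Rightarrow> real" where
  "root_p n p = (if p = \<infinity> then 1 else (real n - 1) powr (1 / real_of_ereal p))"

definition omega :: "nat \<Rightarrow> ereal \<Rightarrow> real \<Rightarrow> real" where
  "omega n p t = (1 + t / root_p n p) ^ (n - 1)"

definition Psi :: "nat \<Rightarrow> ereal \<Rightarrow> real \<Rightarrow> real" where
  "Psi n p t = (1 + 2 * t) * omega n p t"

definition phi :: "nat \<Rightarrow> ereal \<Rightarrow> real \<Rightarrow> real" where
  "phi n p t = (omega n p t - 1) / (1 - 2 * t * omega n p t)"

end

theory Submission
  imports Defs "HOL-Analysis.Analysis"
begin

text \<open>
  With \<open>y = T\<^sup>(\<^sup>N\<^sup>)(x)\<close> and \<open>f(z) = a\<^sub>0 \<Prod>\<^sub>j (z - \<xi>\<^sub>j)\<close>, one has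
  \<open>T\<^sup>(\<^sup>N\<^sup>+\<^sup>1\<^sup>)\<^sub>i(x) - \<xi>\<^sub>i = (x\<^sub>i - \<xi>\<^sub>i) (1 - \<Prod>\<^sub>j\<^sub>\<noteq>\<^sub>i (1 + u\<^sub>j))\<close> with
  \<open>u\<^sub>j = (y\<^sub>j - \<xi>\<^sub>j) / (x\<^sub>i - y\<^sub>j)\<close>. The AM-GM and power mean inequalities bound
  \<open>|\<Prod> (1 + u\<^sub>j) - 1|\<close> by \<open>\<omega>(E(x)) - 1\<close> times the error factor of \<open>y\<close>, so by induction on
  \<open>N\<close> the error of \<open>T\<^sup>(\<^sup>N\<^sup>)(x)\<close> shrinks componentwise by \<open>(\<omega>(E) - 1) \<phi>(E)\<^sup>N\<^sup>-\<^sup>1 \<le> \<phi>(E)\<^sup>N\<close>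
  and \<open>E(T\<^sup>(\<^sup>N\<^sup>)(x)) \<le> \<phi>(E)\<^sup>N E(x)\<close>. As \<open>\<phi>(\<lambda>\<^sup>m t) \<le> \<lambda>\<^sup>m\<^sup>+\<^sup>1\<close> for \<open>\<lambda> = \<phi>(t)\<close>,
  iterating yields the exponents \<open>N(N+1)\<^sup>k\<close> and \<open>(N+1)\<^sup>k - 1\<close>.

  Convergence holds even when \<open>\<Psi>(E(x\<^sup>(\<^sup>0\<^sup>))) = 2\<close>, i.e. \<open>\<lambda> = 1\<close>, since every step also
  contracts by \<open>\<omega>(E(x\<^sup>(\<^sup>0\<^sup>))) - 1 < 1\<close>. The zeros are simple because, when \<open>2 E(x\<^sup>(\<^sup>0\<^sup>)) < 1\<close>,
  two distinct components of \<open>x\<^sup>(\<^sup>0\<^sup>)\<close> cannot approximate the same zero. The bound of order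
  \<open>N + 1\<close> does not need \<open>\<Psi> < 2\<close>: once the iterates are close to the (separated) zeros,
  \<open>E(x\<^sup>(\<^sup>k\<^sup>))\<close> is linear in the maximal error.
\<close>

section \<open>Absolute values\<close>

locale abs_value_field =
  fixes nv :: "'a::field \<Rightarrow> real"
  assumes abs_value: "abs_value nv"
begin

lemma nv_nonneg: "0 \<le> nv x"
  using abs_value by (simp add: abs_value_def)

lemma nv_eq_0_iff: "nv x = 0 \<longleftrightarrow> x = 0"
  using abs_value by (simp add: abs_value_def)

lemma nv_pos_iff: "0 < nv x \<longleftrightarrow> x \<noteq> 0"
  using nv_nonneg nv_eq_0_iff by (simp add: less_le)

lemma nv_mult: "nv (x * y) = nv x * nv y"
  using abs_value by (simp add: abs_value_def)

lemma nv_add_le: "nv (x + y) \<le> nv x + nv y"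
  using abs_value by (simp add: abs_value_def)

lemma nv_1: "nv 1 = 1"
proof -
  have "nv 1 = nv 1 * nv 1" using nv_mult[of 1 1] by simp
  moreover have "nv 1 \<noteq> 0" using nv_eq_0_iff by simp
  ultimately show ?thesis by (metis mult.right_neutral mult_left_cancel)
qed

lemma nv_minus: "nv (- x) = nv x"
proof -
  have "nv (-1) * nv (-1) = 1" using nv_mult[of "-1" "-1"] nv_1 by simp
  then have "nv (-1) = 1"
    using nv_nonneg[of "-1"] power2_eq_1_iff[of "nv (-1)"] by (auto simp: power2_eq_square)
  then show ?thesis using nv_mult[of "-1" x] by simp
qed

lemma nv_minus_commute: "nv (x - y) = nv (y - x)"
  using nv_minus[of "x - y"] by simp

lemma nv_triangle: "nv (x - y) \<le> nv (x - z) + nv (z - y)"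
  using nv_add_le[of "x - z" "z - y"] by simp

lemma nv_triangle_ge: "nv (x - y) - nv (z - y) \<le> nv (x - z)"
  using nv_triangle[of x y z] by linarith

lemma nv_divide: "nv (x / y) = nv x / nv y"
proof (cases "y = 0")
  case False
  then have "nv y * nv (inverse y) = 1" "nv y \<noteq> 0"
    using nv_mult[of y "inverse y"] nv_1 nv_eq_0_iff by simp_all
  then have "nv (inverse y) = inverse (nv y)" by (simp add: field_simps)
  then show ?thesis by (simp add: divide_inverse nv_mult)
qed (use nv_eq_0_iff[of 0] in simp)

lemma nv_prod_one_plus_minus_one_le:
  assumes "finite S"
  shows "nv ((\<Prod>j\<in>S. 1 + u j) - 1) \<le> (\<Prod>j\<in>S. 1 + nv (u j)) - 1"
  using assms
proof (induction S rule: finite_induct)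
  case empty then show ?case using nv_eq_0_iff[of 0] by simp
next
  case (insert a F)
  let ?P = "\<Prod>j\<in>F. 1 + u j" and ?Q = "\<Prod>j\<in>F. 1 + nv (u j)"
  have P_le: "nv ?P \<le> ?Q"
    using nv_add_le[of 1 "?P - 1"] nv_1 insert.IH by simp
  have "(\<Prod>j\<in>insert a F. 1 + u j) - 1 = (?P - 1) + u a * ?P"
    using insert by (simp add: algebra_simps)
  then have "nv ((\<Prod>j\<in>insert a F. 1 + u j) - 1) = nv ((?P - 1) + u a * ?P)"
    by (simp only:)
  also have "\<dots> \<le> nv (?P - 1) + nv (u a) * nv ?P"
    using nv_add_le[of "?P - 1" "u a * ?P"] by (simp add: nv_mult)
  also have "\<dots> \<le> (?Q - 1) + nv (u a) * ?Q"
    using insert.IH P_le nv_nonneg by (simp add: add_mono mult_left_mono)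
  also have "\<dots> = (\<Prod>j\<in>insert a F. 1 + nv (u j)) - 1"
    using insert by (simp add: algebra_simps)
  finally show ?case .
qed

lemma inj_on_imp_uniform_separation:
  fixes \<xi> :: "nat \<Rightarrow> 'a" and n :: nat
  assumes "inj_on \<xi> {..<n}"
  shows "\<exists>\<delta>>0. \<forall>i<n. \<forall>j<n. i \<noteq> j \<longrightarrow> \<delta> \<le> nv (\<xi> i - \<xi> j)"
proof -
  define D where "D = (\<lambda>(i, j). nv (\<xi> i - \<xi> j)) ` {(i, j). i < n \<and> j < n \<and> i \<noteq> j}"
  have "finite D"
    unfolding D_def by (rule finite_imageI, rule finite_subset[of _ "{..<n} \<times> {..<n}"]) auto
  moreover have "0 < d" if "d \<in> D" for d
  proof -
    obtain i j where "i < n" "j < n" "i \<noteq> j" "d = nv (\<xi> i - \<xi> j)"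
      using \<open>d \<in> D\<close> by (auto simp: D_def)
    then show ?thesis using assms by (simp add: nv_pos_iff inj_on_eq_iff)
  qed
  ultimately have "0 < Min (insert 1 D)" by simp
  moreover have "Min (insert 1 D) \<le> nv (\<xi> i - \<xi> j)" if "i < n" "j < n" "i \<noteq> j" for i j
    using that \<open>finite D\<close> by (intro Min_le) (auto simp: D_def)
  ultimately show ?thesis by blast
qed

end

section \<open>Products, power means and \<open>p\<close>-norms\<close>

lemma prod_one_plus_scale_le:
  fixes t :: "'b \<Rightarrow> real"
  assumes "finite S" "0 \<le> c" "c \<le> 1" "\<And>j. j \<in> S \<Longrightarrow> 0 \<le> t j"
  shows "(\<Prod>j\<in>S. 1 + c * t j) - 1 \<le> c * ((\<Prod>j\<in>S. 1 + t j) - 1)"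
  using assms(1,4)
proof (induction S rule: finite_induct)
  case empty then show ?case by simp
next
  case (insert a F)
  let ?A = "\<Prod>j\<in>F. 1 + c * t j" and ?B = "\<Prod>j\<in>F. 1 + t j"
  have IH: "?A - 1 \<le> c * (?B - 1)" using insert by simp
  have "?B \<ge> 1" using insert.prems by (intro prod_ge_1) auto
  then have "c * (?B - 1) \<le> ?B - 1" using assms(2,3) by (intro mult_left_le_one_le) auto
  then have "?A \<le> ?B" using IH by simp
  have "(\<Prod>j\<in>insert a F. 1 + c * t j) - 1 = (?A - 1) + ?A * (c * t a)"
    using insert by (simp add: algebra_simps)
  also have "\<dots> \<le> c * (?B - 1) + ?B * (c * t a)"
    using IH \<open>?A \<le> ?B\<close> insert.prems assms(2) by (intro add_mono mult_right_mono) auto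
  also have "\<dots> = c * ((\<Prod>j\<in>insert a F. 1 + t j) - 1)"
    using insert by (simp add: algebra_simps)
  finally show ?case .
qed

lemma prod_one_plus_le_power_mean:
  fixes t :: "'b \<Rightarrow> real"
  assumes "finite S" "S \<noteq> {}" "\<And>j. j \<in> S \<Longrightarrow> 0 \<le> t j"
  shows "(\<Prod>j\<in>S. 1 + t j) \<le> (1 + (\<Sum>j\<in>S. t j) / card S) ^ card S"
proof -
  define P where "P = (\<Prod>j\<in>S. 1 + t j)"
  have "P \<ge> 1" unfolding P_def using assms(3) by (intro prod_ge_1) auto
  have "card S > 0" using assms by (simp add: card_gt_0_iff)
  have "P powr (1 / card S) \<le> (\<Sum>j\<in>S. (1 + t j) / card S)"
    unfolding P_def by (rule arith_geom_mean[OF assms(1,2)]) (use assms(3) in fastforce)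
  also have "\<dots> = 1 + (\<Sum>j\<in>S. t j) / card S"
    using \<open>card S > 0\<close> by (simp add: add_divide_distrib sum.distrib sum_divide_distrib[symmetric])
  finally have mean: "P powr (1 / card S) \<le> 1 + (\<Sum>j\<in>S. t j) / card S" .
  have "P = (P powr (1 / card S)) ^ card S"
    using \<open>P \<ge> 1\<close> \<open>card S > 0\<close> by (simp add: powr_realpow[symmetric] powr_powr)
  also have "\<dots> \<le> (1 + (\<Sum>j\<in>S. t j) / card S) ^ card S"
    using mean by (intro power_mono) auto
  finally show ?thesis unfolding P_def .
qed

lemma bernoulli_powr:
  fixes x q :: real
  assumes "0 \<le> x" "1 \<le> q"
  shows "1 + q * (x - 1) \<le> x powr q"
proof (cases "x = 0")
  case False
  have "((\<lambda>x. x powr q) has_real_derivative q * 1 powr (q - 1)) (at 1)"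
    by (rule has_real_derivative_powr) auto
  then have "((\<lambda>x. x powr q) has_field_derivative q) (at 1 within {0<..})"
    by (simp add: has_field_derivative_at_within)
  then have "q * (x - 1) \<le> x powr q - 1 powr q"
    using False assms powr_convex
    by (intro convex_on_imp_above_tangent[where A="{0<..}"]) (auto simp: interior_open)
  then show ?thesis by simp
qed (use assms in simp)

lemma sum_div_card_le_power_mean:
  fixes t :: "'b \<Rightarrow> real"
  assumes "finite S" "S \<noteq> {}" "1 \<le> q" "\<And>j. j \<in> S \<Longrightarrow> 0 \<le> t j"
  shows "(\<Sum>j\<in>S. t j) / card S \<le> ((\<Sum>j\<in>S. t j powr q) / card S) powr (1 / q)"
proof -
  define m where "m = real (card S)"
  have "m > 0" using assms(1,2) by (simp add: m_def card_gt_0_iff)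
  define A where "A = (\<Sum>j\<in>S. t j powr q)"
  show ?thesis
  proof (cases "A = 0")
    case True
    then have "\<forall>j\<in>S. t j = 0"
      using assms(1) unfolding A_def by (subst (asm) sum_nonneg_eq_0_iff) auto
    then show ?thesis by simp
  next
    case False
    then have "A > 0" unfolding A_def by (simp add: less_le sum_nonneg)
    define M where "M = (A / m) powr (1 / q)"
    have "M > 0" using \<open>A > 0\<close> \<open>m > 0\<close> by (simp add: M_def)
    have "M powr q = A / m" using \<open>A > 0\<close> \<open>m > 0\<close> assms(3) by (simp add: M_def powr_powr)
    have "(\<Sum>j\<in>S. 1 + q * (t j / M - 1)) \<le> (\<Sum>j\<in>S. (t j / M) powr q)"
      using assms(3,4) \<open>M > 0\<close> by (intro sum_mono bernoulli_powr) auto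
    also have "\<dots> = A / M powr q"
      using assms(4) \<open>M > 0\<close> by (simp add: A_def powr_divide sum_divide_distrib)
    also have "\<dots> = m" using \<open>M powr q = A / m\<close> \<open>A > 0\<close> \<open>m > 0\<close> by simp
    finally have "m + q * ((\<Sum>j\<in>S. t j) / M - m) \<le> m"
      by (simp add: m_def sum.distrib sum_distrib_left sum_subtractf
          sum_divide_distrib[symmetric] algebra_simps)
    then have "(\<Sum>j\<in>S. t j) / M \<le> m" using assms(3) by (simp add: mult_le_0_iff)
    then have "(\<Sum>j\<in>S. t j) / m \<le> M" using \<open>M > 0\<close> \<open>m > 0\<close> by (simp add: field_simps)
    then show ?thesis by (simp add: M_def A_def m_def)
  qed
qed

lemma pnorm_ge_abs:
  assumes "1 \<le> p" "i < n"
  shows "\<bar>v i\<bar> \<le> pnorm n p v"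
proof (cases "p = \<infinity>")
  case False
  define q where "q = real_of_ereal p"
  have "1 \<le> q" using assms(1) False by (cases p) (auto simp: q_def)
  have "\<bar>v i\<bar> = (\<bar>v i\<bar> powr q) powr (1 / q)" using \<open>1 \<le> q\<close> by (simp add: powr_powr)
  also have "\<dots> \<le> (\<Sum>j<n. \<bar>v j\<bar> powr q) powr (1 / q)"
    using assms(2) \<open>1 \<le> q\<close> by (intro powr_mono2 member_le_sum) auto
  finally show ?thesis using False by (simp add: pnorm_def q_def)
qed (use assms in \<open>simp add: pnorm_def\<close>)

lemma pnorm_nonneg: "1 \<le> p \<Longrightarrow> 0 < n \<Longrightarrow> 0 \<le> pnorm n p v"
  using pnorm_ge_abs[of p 0 n v] by linarith

lemma pnorm_mono:
  assumes "1 \<le> p" "\<And>i. i < n \<Longrightarrow> \<bar>u i\<bar> \<le> \<bar>v i\<bar>"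
  shows "pnorm n p u \<le> pnorm n p v"
proof (cases "p = \<infinity>")
  case True
  show ?thesis
  proof (cases "n = 0")
    case False
    have "\<bar>u i\<bar> \<le> Max ((\<lambda>i. \<bar>v i\<bar>) ` {..<n})" if "i < n" for i
      using that assms(2)[OF that] by (meson Max_ge finite_imageI finite_lessThan image_eqI
          lessThan_iff order_trans)
    then show ?thesis using True False unfolding pnorm_def by (auto intro!: Max.boundedI)
  qed (simp add: pnorm_def)
next
  case False
  define q where "q = real_of_ereal p"
  have "1 \<le> q" using assms(1) False by (cases p) (auto simp: q_def)
  have "(\<Sum>j<n. \<bar>u j\<bar> powr q) \<le> (\<Sum>j<n. \<bar>v j\<bar> powr q)"
    using assms(2) \<open>1 \<le> q\<close> by (intro sum_mono powr_mono2) auto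
  then have "(\<Sum>j<n. \<bar>u j\<bar> powr q) powr (1/q) \<le> (\<Sum>j<n. \<bar>v j\<bar> powr q) powr (1/q)"
    using \<open>1 \<le> q\<close> by (intro powr_mono2) (auto intro: sum_nonneg)
  then show ?thesis using False by (simp add: pnorm_def q_def)
qed

lemma pnorm_scale:
  assumes "1 \<le> p" "0 < n" "0 \<le> c"
  shows "pnorm n p (\<lambda>i. c * v i) = c * pnorm n p v"
proof (cases "p = \<infinity>")
  case True
  have "mono ((*) c)" using assms(3) by (simp add: mono_def mult_left_mono)
  then have "c * Max ((\<lambda>i. \<bar>v i\<bar>) ` {..<n}) = Max ((*) c ` (\<lambda>i. \<bar>v i\<bar>) ` {..<n})"
    using assms(2) by (intro mono_Max_commute) auto
  also have "(*) c ` (\<lambda>i. \<bar>v i\<bar>) ` {..<n} = (\<lambda>i. \<bar>c * v i\<bar>) ` {..<n}"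
    using assms(3) by (auto simp: abs_mult)
  finally show ?thesis using True by (simp add: pnorm_def)
next
  case False
  define q where "q = real_of_ereal p"
  have "1 \<le> q" using assms(1) False by (cases p) (auto simp: q_def)
  have "(\<Sum>j<n. \<bar>c * v j\<bar> powr q) = c powr q * (\<Sum>j<n. \<bar>v j\<bar> powr q)"
    using assms(3) by (simp add: abs_mult powr_mult sum_distrib_left)
  then have "(\<Sum>j<n. \<bar>c * v j\<bar> powr q) powr (1/q)
      = (c powr q) powr (1/q) * (\<Sum>j<n. \<bar>v j\<bar> powr q) powr (1/q)"
    by (simp add: powr_mult sum_nonneg)
  also have "(c powr q) powr (1/q) = c" using \<open>1 \<le> q\<close> assms(3) by (simp add: powr_powr)
  finally show ?thesis using False by (simp add: pnorm_def q_def)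
qed

lemma pnorm_le_scale:
  assumes "1 \<le> p" "0 < n" "0 \<le> c" "\<And>i. i < n \<Longrightarrow> \<bar>u i\<bar> \<le> c * \<bar>v i\<bar>"
  shows "pnorm n p u \<le> c * pnorm n p v"
proof -
  have "pnorm n p u \<le> pnorm n p (\<lambda>i. c * \<bar>v i\<bar>)"
    using assms(3,4) by (intro pnorm_mono[OF assms(1)]) (simp add: abs_mult)
  also have "\<dots> = c * pnorm n p (\<lambda>i. \<bar>v i\<bar>)" by (rule pnorm_scale[OF assms(1-3)])
  also have "pnorm n p (\<lambda>i. \<bar>v i\<bar>) = pnorm n p v" by (simp add: pnorm_def)
  finally show ?thesis .
qed

section \<open>The functions \<open>\<omega>\<close> and \<open>\<phi>\<close>\<close>

text \<open>Since \<open>Psi\<close> is increasing on \<open>[0, \<infinity>)\<close>, this is the interval \<open>[0, R]\<close>, with \<open>R\<close> the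
  positive root of \<open>Psi t = 2\<close>.\<close>
definition admissible :: "nat \<Rightarrow> ereal \<Rightarrow> real \<Rightarrow> bool" where
  "admissible n p t \<longleftrightarrow> 0 \<le> t \<and> Psi n p t \<le> 2"

locale norm_exponent =
  fixes n :: nat and p :: ereal
  assumes p_ge_1: "1 \<le> p" and n_ge_2: "2 \<le> n"
begin

lemma n_pos: "0 < n"
  using n_ge_2 by simp

lemma lessThan_minus_ne_empty: "{..<n} - {i} \<noteq> {}"
proof -
  have "(if i = 0 then 1 else 0) \<in> {..<n} - {i}" using n_ge_2 by auto
  then show ?thesis by blast
qed

lemma root_p_ge_1: "1 \<le> root_p n p"
proof (cases "p = \<infinity>")
  case False
  then have "1 \<le> real_of_ereal p" using p_ge_1 by (cases p) auto
  then show ?thesis using False n_ge_2 by (simp add: root_p_def ge_one_powr_ge_zero)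
qed (simp add: root_p_def)

lemma sum_div_le_pnorm_div_root_p:
  assumes "i < n" "\<And>j. 0 \<le> t j"
  shows "(\<Sum>j\<in>{..<n} - {i}. t j) / (real n - 1) \<le> pnorm n p t / root_p n p"
proof -
  let ?S = "{..<n} - {i}"
  have card_S: "real (card ?S) = real n - 1" using assms(1) n_ge_2 by (simp add: of_nat_diff)
  show ?thesis
  proof (cases "p = \<infinity>")
    case True
    have "(\<Sum>j\<in>?S. t j) \<le> of_nat (card ?S) * pnorm n p t"
      using pnorm_ge_abs[OF p_ge_1, of _ n t] assms(2)
      by (intro sum_bounded_above) (metis Diff_iff abs_of_nonneg lessThan_iff)
    then show ?thesis using True n_ge_2 card_S by (simp add: root_p_def field_simps)
  next
    case False
    define q where "q = real_of_ereal p"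
    have "1 \<le> q" using p_ge_1 False by (cases p) (auto simp: q_def)
    have A_le: "(\<Sum>j\<in>?S. t j powr q) \<le> (\<Sum>j<n. \<bar>t j\<bar> powr q)"
      using assms(2) by (simp add: sum_mono2)
    have "(\<Sum>j\<in>?S. t j) / (real n - 1) \<le> ((\<Sum>j\<in>?S. t j powr q) / (real n - 1)) powr (1 / q)"
      using sum_div_card_le_power_mean[of ?S q t] lessThan_minus_ne_empty \<open>1 \<le> q\<close> assms(2)
      by (simp add: card_S)
    also have "\<dots> = (\<Sum>j\<in>?S. t j powr q) powr (1 / q) / (real n - 1) powr (1 / q)"
      using n_ge_2 by (simp add: powr_divide sum_nonneg)
    also have "\<dots> \<le> pnorm n p t / root_p n p"
      using A_le \<open>1 \<le> q\<close> False n_ge_2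
      by (auto simp: pnorm_def root_p_def q_def intro!: divide_right_mono powr_mono2 sum_nonneg)
    finally show ?thesis .
  qed
qed

lemma prod_one_plus_le_omega:
  assumes "i < n" "\<And>j. 0 \<le> t j"
  shows "(\<Prod>j\<in>{..<n} - {i}. 1 + t j) \<le> omega n p (pnorm n p t)"
proof -
  let ?S = "{..<n} - {i}"
  have card_S: "card ?S = n - 1" "real (card ?S) = real n - 1"
    using assms(1) n_ge_2 by (simp_all add: of_nat_diff)
  have "(\<Prod>j\<in>?S. 1 + t j) \<le> (1 + (\<Sum>j\<in>?S. t j) / (real n - 1)) ^ (n - 1)"
    using prod_one_plus_le_power_mean[of ?S t] lessThan_minus_ne_empty assms(2) card_S by simp
  also have "\<dots> \<le> (1 + pnorm n p t / root_p n p) ^ (n - 1)"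
    using sum_div_le_pnorm_div_root_p[of i t] assms n_ge_2
    by (intro power_mono add_left_mono) (auto intro!: add_nonneg_nonneg divide_nonneg_nonneg sum_nonneg)
  finally show ?thesis by (simp add: omega_def)
qed

lemma omega_ge_1: "0 \<le> t \<Longrightarrow> 1 \<le> omega n p t"
  unfolding omega_def using root_p_ge_1 by (intro one_le_power) simp

lemma omega_gt_1: "0 < t \<Longrightarrow> 1 < omega n p t"
  unfolding omega_def using root_p_ge_1 n_ge_2 by (intro one_less_power) auto

lemma omega_mono: "0 \<le> s \<Longrightarrow> s \<le> t \<Longrightarrow> omega n p s \<le> omega n p t"
  unfolding omega_def using root_p_ge_1 by (intro power_mono add_left_mono divide_right_mono) auto

lemma omega_scale:
  assumes "0 \<le> c" "c \<le> 1" "0 \<le> t"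
  shows "omega n p (c * t) - 1 \<le> c * (omega n p t - 1)"
  using prod_one_plus_scale_le[of "{..<n - 1}" c "\<lambda>_. t / root_p n p"] assms root_p_ge_1
  by (simp add: omega_def)

lemma phi_0: "phi n p 0 = 0"
  by (simp add: phi_def omega_def)

lemma admissible_omega_le: "admissible n p t \<Longrightarrow> omega n p t - 1 \<le> 1 - 2 * t * omega n p t"
  unfolding admissible_def Psi_def by (simp add: algebra_simps)

lemma admissible_denom_pos:
  assumes "admissible n p t"
  shows "0 < 1 - 2 * t * omega n p t"
proof (cases "t = 0")
  case False
  then have "0 < t" using assms by (simp add: admissible_def)
  then show ?thesis using omega_gt_1 admissible_omega_le[OF assms] by fastforce
qed simp

lemma admissible_omega_lt_2:
  assumes "admissible n p t"
  shows "omega n p t < 2"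
proof (cases "t = 0")
  case False
  then have "0 < 2 * t * omega n p t"
    using assms omega_ge_1[of t] by (simp add: admissible_def)
  then show ?thesis using admissible_omega_le[OF assms] by linarith
qed (simp add: omega_def)

lemma admissible_lt_half: "admissible n p t \<Longrightarrow> 2 * t < 1"
  using admissible_denom_pos[of t] omega_ge_1[of t] mult_le_cancel_left1[of "2 * t" "omega n p t"]
  by (auto simp: admissible_def)

lemma admissible_mono:
  assumes "admissible n p t" "0 \<le> s" "s \<le> t"
  shows "admissible n p s"
proof -
  have "(1 + 2 * s) * omega n p s \<le> (1 + 2 * t) * omega n p t"
    using assms omega_mono[of s t] omega_ge_1[of s] by (intro mult_mono) auto
  then show ?thesis using assms by (simp add: admissible_def Psi_def)
qed

lemma phi_nonneg: "admissible n p t \<Longrightarrow> 0 \<le> phi n p t"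
  unfolding phi_def using admissible_denom_pos[of t] omega_ge_1[of t] by (simp add: admissible_def)

lemma phi_le_1: "admissible n p t \<Longrightarrow> phi n p t \<le> 1"
  unfolding phi_def using admissible_denom_pos admissible_omega_le by simp

lemma omega_minus_1_le_phi:
  assumes "admissible n p t"
  shows "omega n p t - 1 \<le> phi n p t"
proof -
  have "0 \<le> t" using assms by (simp add: admissible_def)
  then have "0 \<le> t * omega n p t" "1 \<le> omega n p t" using omega_ge_1[of t] by simp_all
  then have "(omega n p t - 1) * (1 - 2 * t * omega n p t) \<le> omega n p t - 1"
    by (intro mult_left_le) auto
  then show ?thesis unfolding phi_def using admissible_denom_pos[OF assms] by (simp add: le_divide_eq)
qed

lemma omega_minus_1_div_le_phi:
  assumes "admissible n p t"
  shows "(omega n p t - 1) / (1 - omega n p t * t) \<le> phi n p t"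
proof -
  define u where "u = t * omega n p t"
  have "0 \<le> t" using assms by (simp add: admissible_def)
  then have "0 \<le> u" "1 \<le> omega n p t" using omega_ge_1[of t] by (simp_all add: u_def)
  moreover have "0 < 1 - 2 * u" using admissible_denom_pos[OF assms] by (simp add: u_def mult.assoc)
  ultimately have "(omega n p t - 1) / (1 - u) \<le> (omega n p t - 1) / (1 - 2 * u)"
    by (intro divide_left_mono) auto
  then show ?thesis by (simp add: phi_def u_def mult.commute mult.left_commute)
qed

lemma phi_scale:
  assumes "admissible n p t" "0 \<le> c" "c \<le> 1"
  shows "phi n p (c * t) \<le> c * phi n p t"
proof -
  have "0 \<le> t" using assms by (simp add: admissible_def)
  then have "c * t \<le> t" "0 \<le> c * t" using assms by (simp_all add: mult_left_le_one_le)
  then have "c * t * omega n p (c * t) \<le> t * omega n p t"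
    using \<open>0 \<le> t\<close> omega_mono[of "c * t" t] omega_ge_1[of "c * t"] by (intro mult_mono) auto
  then have "phi n p (c * t) \<le> c * (omega n p t - 1) / (1 - 2 * t * omega n p t)"
    unfolding phi_def using admissible_denom_pos[OF assms(1)] omega_scale[OF assms(2,3) \<open>0 \<le> t\<close>]
      omega_ge_1[OF \<open>0 \<le> c * t\<close>]
    by (intro frac_le) auto
  then show ?thesis unfolding phi_def by simp
qed

lemma phi_mono:
  assumes "admissible n p t" "0 \<le> s" "s \<le> t"
  shows "phi n p s \<le> phi n p t"
proof -
  have "s * omega n p s \<le> t * omega n p t"
    using assms omega_mono[OF assms(2,3)] omega_ge_1[OF assms(2)] by (intro mult_mono) auto
  then show ?thesis unfolding phi_def
    using admissible_denom_pos[OF assms(1)] omega_mono[OF assms(2,3)] omega_ge_1[of t] assms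
    by (intro frac_le) auto
qed

lemma phi_power_bound:
  assumes "admissible n p t" "0 \<le> s" "s \<le> phi n p t ^ m * t"
  shows "admissible n p s" and "phi n p s \<le> phi n p t ^ Suc m"
proof -
  define c where "c = phi n p t ^ m"
  have c: "0 \<le> c" "c \<le> 1" using phi_nonneg[OF assms(1)] phi_le_1[OF assms(1)]
    by (simp_all add: c_def power_le_one)
  have "0 \<le> t" using assms(1) by (simp add: admissible_def)
  then have "c * t \<le> t" using c by (simp add: mult_left_le_one_le)
  then show "admissible n p s" using admissible_mono[OF assms(1,2)] assms(3) c_def by simp
  have "phi n p s \<le> phi n p (c * t)"
    using phi_mono admissible_mono[OF assms(1)] assms(2,3) c \<open>0 \<le> t\<close> \<open>c * t \<le> t\<close> c_def
    by simp
  also have "\<dots> \<le> c * phi n p t" by (rule phi_scale[OF assms(1) c])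
  finally show "phi n p s \<le> phi n p t ^ Suc m" by (simp add: c_def mult.commute)
qed

end

section \<open>One Weierstrass-type step\<close>

locale weierstrass_setting = abs_value_field nv + norm_exponent n p
  for nv :: "'a::field \<Rightarrow> real" and n p +
  fixes f :: "'a poly" and \<xi> :: "nat \<Rightarrow> 'a"
  assumes degree_f: "degree f = n" and root_vector: "root_vector f n \<xi>"
begin

lemma lead_coeff_nonzero: "lead_coeff f \<noteq> 0"
  using degree_f n_ge_2 by auto

lemma poly_eq_root_factor:
  assumes "i < n"
  shows "poly f z = lead_coeff f * (z - \<xi> i) * (\<Prod>j\<in>{..<n} - {i}. z - \<xi> j)"
  using root_vector assms by (simp add: root_vector_def prod.remove[of "{..<n}" i] mult.assoc)

lemma dvec_nonneg: "0 \<le> dvec nv n x i"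
  unfolding dvec_def using lessThan_minus_ne_empty[of i] nv_nonneg by (subst Min_ge_iff) auto

lemma dvec_pos: "inj_on x {..<n} \<Longrightarrow> i < n \<Longrightarrow> 0 < dvec nv n x i"
  unfolding dvec_def using lessThan_minus_ne_empty[of i]
  by (subst Min_gr_iff) (auto simp: nv_pos_iff inj_on_eq_iff)

lemma dvec_le: "j < n \<Longrightarrow> j \<noteq> i \<Longrightarrow> dvec nv n x i \<le> nv (x i - x j)"
  unfolding dvec_def by (intro Min_le) auto

definition rel_err :: "(nat \<Rightarrow> 'a) \<Rightarrow> nat \<Rightarrow> real" where
  "rel_err x i = nv (x i - \<xi> i) / dvec nv n x i"

lemma Efun_eq_pnorm_rel_err: "Efun nv n p \<xi> x = pnorm n p (rel_err x)"
  by (simp add: Efun_def rel_err_def[abs_def])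

lemma rel_err_nonneg: "0 \<le> rel_err x i"
  unfolding rel_err_def using nv_nonneg dvec_nonneg by simp

lemma rel_err_le_Efun: "i < n \<Longrightarrow> rel_err x i \<le> Efun nv n p \<xi> x"
  using pnorm_ge_abs[OF p_ge_1, of i n "rel_err x"] rel_err_nonneg[of x i]
  by (simp add: Efun_eq_pnorm_rel_err)

lemma Efun_nonneg: "0 \<le> Efun nv n p \<xi> x"
  by (simp add: Efun_eq_pnorm_rel_err pnorm_nonneg[OF p_ge_1 n_pos])

lemma err_le_Efun:
  assumes "inj_on x {..<n}" "i < n" "j < n" "j \<noteq> i"
  shows "nv (x i - \<xi> i) \<le> Efun nv n p \<xi> x * nv (x i - x j)"
proof -
  have "nv (x i - \<xi> i) = rel_err x i * dvec nv n x i"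
    using dvec_pos[OF assms(1,2)] by (simp add: rel_err_def)
  also have "\<dots> \<le> Efun nv n p \<xi> x * nv (x i - x j)"
    using rel_err_le_Efun[OF assms(2)] dvec_le[OF assms(3,4)] rel_err_nonneg dvec_nonneg Efun_nonneg
    by (intro mult_mono) auto
  finally show ?thesis .
qed

lemma dist_le_of_err_le:
  assumes "inj_on x {..<n}" "i < n" "j < n" "j \<noteq> i"
    and "0 \<le> \<mu>" "\<mu> \<le> omega n p (Efun nv n p \<xi> x) - 1"
    and "nv (y j - \<xi> j) \<le> \<mu> * nv (x j - \<xi> j)"
  shows "nv (y j - x j) \<le> omega n p (Efun nv n p \<xi> x) * Efun nv n p \<xi> x * nv (x i - x j)"
proof -
  have "nv (y j - x j) \<le> nv (y j - \<xi> j) + nv (x j - \<xi> j)"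
    using nv_triangle[of "y j" "x j" "\<xi> j"] nv_minus_commute[of "x j"] by simp
  also have "\<dots> \<le> (1 + \<mu>) * nv (x j - \<xi> j)" using assms(7) by (simp add: algebra_simps)
  also have "\<dots> \<le> omega n p (Efun nv n p \<xi> x) * (Efun nv n p \<xi> x * nv (x i - x j))"
    using err_le_Efun[OF assms(1,3,2)] assms(4-6) nv_minus_commute[of "x j"] nv_nonneg
    by (intro mult_mono) auto
  finally show ?thesis by (simp add: mult.assoc)
qed

lemma dist_ge_of_err_le:
  assumes x: "inj_on x {..<n}"
    and \<mu>: "0 \<le> \<mu>" "\<mu> \<le> omega n p (Efun nv n p \<xi> x) - 1"
    and err: "\<And>i. i < n \<Longrightarrow> nv (y i - \<xi> i) \<le> \<mu> * nv (x i - \<xi> i)"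
    and ij: "i < n" "j < n" "j \<noteq> i"
  shows "(1 - 2 * Efun nv n p \<xi> x * omega n p (Efun nv n p \<xi> x)) * nv (x i - x j)
    \<le> nv (y i - y j)"
  using dist_le_of_err_le[where y = y, OF x ij \<mu> err[OF ij(2)]]
    dist_le_of_err_le[where y = y, OF x ij(2,1) ij(3)[symmetric] \<mu> err[OF ij(1)]]
    nv_triangle[of "x i" "x j" "y i"] nv_triangle[of "y i" "x j" "y j"]
    nv_minus_commute[of "x i" "y i"] nv_minus_commute[of "x j"]
  by (simp add: algebra_simps)

lemma roots_inj_on:
  assumes "inj_on x {..<n}" "admissible n p (Efun nv n p \<xi> x)"
  shows "inj_on \<xi> {..<n}"
proof (rule inj_onI, rule ccontr)
  fix i j assume ij: "i \<in> {..<n}" "j \<in> {..<n}" "\<xi> i = \<xi> j" "i \<noteq> j"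
  let ?d = "nv (x i - x j)"
  have "0 < ?d" using assms(1) ij by (simp add: nv_pos_iff inj_on_eq_iff)
  have "?d \<le> nv (x i - \<xi> i) + nv (x j - \<xi> j)"
    using nv_triangle[of "x i" "x j" "\<xi> i"] nv_minus_commute[of "\<xi> i"] ij(3) by simp
  also have "\<dots> \<le> 2 * Efun nv n p \<xi> x * ?d"
    using err_le_Efun[OF assms(1), of i j] err_le_Efun[OF assms(1), of j i] ij
      nv_minus_commute[of "x j" "x i"] by simp
  finally have "1 \<le> 2 * Efun nv n p \<xi> x" using \<open>0 < ?d\<close> by simp
  then show False using admissible_lt_half[OF assms(2)] by simp
qed

lemma weierstrass_correction_eq:
  assumes "i < n" "\<And>j. j < n \<Longrightarrow> j \<noteq> i \<Longrightarrow> z \<noteq> y j"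
  shows "z - poly f z / (lead_coeff f * (\<Prod>j\<in>{..<n} - {i}. z - y j)) - \<xi> i
    = (z - \<xi> i) * (1 - (\<Prod>j\<in>{..<n} - {i}. 1 + (y j - \<xi> j) / (z - y j)))"
proof -
  let ?S = "{..<n} - {i}"
  have "(\<Prod>j\<in>?S. 1 + (y j - \<xi> j) / (z - y j)) = (\<Prod>j\<in>?S. (z - \<xi> j) / (z - y j))"
    using assms(2) by (intro prod.cong) (auto simp: field_simps)
  also have "\<dots> = (\<Prod>j\<in>?S. z - \<xi> j) / (\<Prod>j\<in>?S. z - y j)"
    by (rule prod_dividef)
  finally have "poly f z / (lead_coeff f * (\<Prod>j\<in>?S. z - y j))
      = (z - \<xi> i) * (\<Prod>j\<in>?S. 1 + (y j - \<xi> j) / (z - y j))"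
    using poly_eq_root_factor[OF assms(1)] lead_coeff_nonzero assms(2) by (simp add: field_simps)
  then show ?thesis by (simp add: algebra_simps)
qed

lemma nv_one_minus_prod_le_omega:
  assumes "i < n" "0 \<le> c" "c \<le> 1"
    and "\<And>j. j < n \<Longrightarrow> j \<noteq> i \<Longrightarrow> nv (u j) \<le> c * rel_err x j"
  shows "nv (1 - (\<Prod>j\<in>{..<n} - {i}. 1 + u j)) \<le> c * (omega n p (Efun nv n p \<xi> x) - 1)"
proof -
  let ?S = "{..<n} - {i}"
  have "nv (1 - (\<Prod>j\<in>?S. 1 + u j)) \<le> (\<Prod>j\<in>?S. 1 + nv (u j)) - 1"
    using nv_prod_one_plus_minus_one_le[of ?S u] by (simp add: nv_minus_commute)
  also have "\<dots> \<le> (\<Prod>j\<in>?S. 1 + c * rel_err x j) - 1"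
    using assms(4) by (simp, intro prod_mono) (auto intro: add_nonneg_nonneg nv_nonneg)
  also have "\<dots> \<le> c * ((\<Prod>j\<in>?S. 1 + rel_err x j) - 1)"
    using assms(2,3) rel_err_nonneg by (intro prod_one_plus_scale_le) auto
  also have "\<dots> \<le> c * (omega n p (Efun nv n p \<xi> x) - 1)"
    using prod_one_plus_le_omega[OF assms(1), of "rel_err x"] rel_err_nonneg assms(2)
    by (simp add: Efun_eq_pnorm_rel_err mult_left_mono)
  finally show ?thesis .
qed

lemma weierstrass_correction_error_le:
  assumes x: "inj_on x {..<n}" and i: "i < n"
    and D: "0 < D" and \<beta>: "0 \<le> \<beta>" "\<beta> \<le> D"
    and sep: "\<And>j. j < n \<Longrightarrow> j \<noteq> i \<Longrightarrow> D * nv (x i - x j) \<le> nv (x i - y j)"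
    and err: "\<And>j. j < n \<Longrightarrow> nv (y j - \<xi> j) \<le> \<beta> * nv (x j - \<xi> j)"
  shows "\<forall>j<n. j \<noteq> i \<longrightarrow> x i \<noteq> y j"
    and "nv (x i - poly f (x i) / (lead_coeff f * (\<Prod>j\<in>{..<n} - {i}. x i - y j)) - \<xi> i)
      \<le> \<beta> / D * (omega n p (Efun nv n p \<xi> x) - 1) * nv (x i - \<xi> i)"
proof -
  have x_pos: "0 < nv (x i - x j)" if "j < n" "j \<noteq> i" for j
    using that x i by (simp add: nv_pos_iff inj_on_eq_iff)
  then have y_pos: "0 < nv (x i - y j)" if "j < n" "j \<noteq> i" for j
    using mult_pos_pos[OF D x_pos[OF that]] sep[OF that] by simp
  then show ne: "\<forall>j<n. j \<noteq> i \<longrightarrow> x i \<noteq> y j" by (auto simp: nv_pos_iff)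
  have "nv ((y j - \<xi> j) / (x i - y j)) \<le> \<beta> / D * rel_err x j" if "j < n" "j \<noteq> i" for j
  proof -
    have "nv ((y j - \<xi> j) / (x i - y j)) \<le> (\<beta> * nv (x j - \<xi> j)) / (D * nv (x i - x j))"
      using that err[of j] sep[of j] D \<beta> x_pos[OF that] nv_nonneg
      by (simp add: nv_divide) (intro frac_le, auto)
    also have "\<dots> \<le> (\<beta> * nv (x j - \<xi> j)) / (D * dvec nv n x j)"
      using that i dvec_le[of i j x] dvec_pos[OF x, of j] x_pos[OF that]
        nv_minus_commute[of "x i" "x j"] D \<beta> nv_nonneg
      by (intro divide_left_mono mult_left_mono mult_pos_pos) auto
    finally show ?thesis by (simp add: rel_err_def)
  qed
  then have "nv (1 - (\<Prod>j\<in>{..<n} - {i}. 1 + (y j - \<xi> j) / (x i - y j)))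
      \<le> \<beta> / D * (omega n p (Efun nv n p \<xi> x) - 1)"
    using D \<beta> by (intro nv_one_minus_prod_le_omega[OF i]) auto
  then have "nv (x i - \<xi> i) * nv (1 - (\<Prod>j\<in>{..<n} - {i}. 1 + (y j - \<xi> j) / (x i - y j)))
      \<le> nv (x i - \<xi> i) * (\<beta> / D * (omega n p (Efun nv n p \<xi> x) - 1))"
    by (rule mult_left_mono) (rule nv_nonneg)
  then show "nv (x i - poly f (x i) / (lead_coeff f * (\<Prod>j\<in>{..<n} - {i}. x i - y j)) - \<xi> i)
      \<le> \<beta> / D * (omega n p (Efun nv n p \<xi> x) - 1) * nv (x i - \<xi> i)"
    using ne weierstrass_correction_eq[OF i, of "x i" y] by (simp add: nv_mult mult_ac)
qed

lemma weierstrass_correction_error_le_phi: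
  assumes x: "inj_on x {..<n}" and adm: "admissible n p (Efun nv n p \<xi> x)" and i: "i < n"
    and err: "\<And>j. j < n \<Longrightarrow> nv (y j - \<xi> j)
      \<le> (omega n p (Efun nv n p \<xi> x) - 1) * phi n p (Efun nv n p \<xi> x) ^ m * nv (x j - \<xi> j)"
  shows "\<forall>j<n. j \<noteq> i \<longrightarrow> x i \<noteq> y j"
    and "nv (x i - poly f (x i) / (lead_coeff f * (\<Prod>j\<in>{..<n} - {i}. x i - y j)) - \<xi> i)
      \<le> (omega n p (Efun nv n p \<xi> x) - 1) * phi n p (Efun nv n p \<xi> x) ^ Suc m * nv (x i - \<xi> i)"
proof -
  let ?t = "Efun nv n p \<xi> x"
  let ?W = "omega n p ?t"
  let ?\<phi> = "phi n p ?t"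
  define \<beta> where "\<beta> = (?W - 1) * ?\<phi> ^ m"
  define D where "D = 1 - ?W * ?t"
  have "0 \<le> ?t" using adm by (simp add: admissible_def)
  then have "1 \<le> ?W" "0 \<le> ?W * ?t" using omega_ge_1[of ?t] by simp_all
  have "?W - 1 \<le> D" "0 < D"
    using admissible_omega_le[OF adm] admissible_denom_pos[OF adm] \<open>0 \<le> ?W * ?t\<close>
    by (simp_all add: D_def algebra_simps)
  have "0 \<le> \<beta>" "\<beta> \<le> ?W - 1"
    using \<open>1 \<le> ?W\<close> phi_nonneg[OF adm] phi_le_1[OF adm]
    by (simp_all add: \<beta>_def mult_left_le power_le_one)
  have "\<beta> \<le> D" using \<open>\<beta> \<le> ?W - 1\<close> \<open>?W - 1 \<le> D\<close> by simp
  note err_\<beta> = err[unfolded \<beta>_def[symmetric]]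
  have sep: "D * nv (x i - x j) \<le> nv (x i - y j)" if "j < n" "j \<noteq> i" for j
    using dist_le_of_err_le[where y = y, OF x i that \<open>0 \<le> \<beta>\<close> \<open>\<beta> \<le> ?W - 1\<close> err_\<beta>[OF that(1)]]
      nv_triangle_ge[of "x i" "x j" "y j"]
    by (simp add: D_def algebra_simps)
  note step = weierstrass_correction_error_le[OF x i \<open>0 < D\<close> \<open>0 \<le> \<beta>\<close> \<open>\<beta> \<le> D\<close> sep err_\<beta>]
  show "\<forall>j<n. j \<noteq> i \<longrightarrow> x i \<noteq> y j" by (rule step(1))
  have "\<beta> / D = ?\<phi> ^ m * ((?W - 1) / (1 - ?W * ?t))" by (simp add: \<beta>_def D_def)
  also have "\<dots> \<le> ?\<phi> ^ m * ?\<phi>"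
    using omega_minus_1_div_le_phi[OF adm] phi_nonneg[OF adm] by (intro mult_left_mono) auto
  finally have "\<beta> / D * (?W - 1) * nv (x i - \<xi> i) \<le> ?\<phi> ^ Suc m * (?W - 1) * nv (x i - \<xi> i)"
    using \<open>1 \<le> ?W\<close> nv_nonneg by (intro mult_right_mono) (auto simp: mult.commute)
  then show "nv (x i - poly f (x i) / (lead_coeff f * (\<Prod>j\<in>{..<n} - {i}. x i - y j)) - \<xi> i)
      \<le> (?W - 1) * ?\<phi> ^ Suc m * nv (x i - \<xi> i)"
    using step(2) by (simp add: mult_ac)
qed

lemma WT_error_le:
  assumes x: "inj_on x {..<n}" and adm: "admissible n p (Efun nv n p \<xi> x)"
  shows "x \<in> WD f n (Suc N) \<and> (\<forall>i<n. nv (WT f n (Suc N) x i - \<xi> i)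
    \<le> (omega n p (Efun nv n p \<xi> x) - 1) * phi n p (Efun nv n p \<xi> x) ^ N * nv (x i - \<xi> i))"
proof (induction N)
  case 0
  have "nv (WT f n (Suc 0) x i - \<xi> i) \<le> (omega n p (Efun nv n p \<xi> x) - 1) * nv (x i - \<xi> i)"
    if "i < n" for i
    using weierstrass_correction_error_le(2)[OF x that, of 1 1 x] by simp
  then show ?case using x by (simp add: inj_on_eq_iff)
next
  case (Suc N)
  note step = weierstrass_correction_error_le_phi[OF x adm _ conjunct2[OF Suc.IH, rule_format]]
  show ?case using Suc.IH step by auto
qed

lemma dvec_ge_of_err_le:
  assumes x: "inj_on x {..<n}" and adm: "admissible n p (Efun nv n p \<xi> x)"
    and \<mu>: "0 \<le> \<mu>" "\<mu> \<le> omega n p (Efun nv n p \<xi> x) - 1"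
    and err: "\<And>i. i < n \<Longrightarrow> nv (y i - \<xi> i) \<le> \<mu> * nv (x i - \<xi> i)" and "i < n"
  shows "(1 - 2 * Efun nv n p \<xi> x * omega n p (Efun nv n p \<xi> x)) * dvec nv n x i \<le> dvec nv n y i"
proof -
  let ?K = "1 - 2 * Efun nv n p \<xi> x * omega n p (Efun nv n p \<xi> x)"
  have "?K * dvec nv n x i \<le> Min ((\<lambda>j. nv (y i - y j)) ` ({..<n} - {i}))"
  proof (rule Min.boundedI)
    fix a assume "a \<in> (\<lambda>j. nv (y i - y j)) ` ({..<n} - {i})"
    then obtain j where "j < n" "j \<noteq> i" "a = nv (y i - y j)" by auto
    then show "?K * dvec nv n x i \<le> a"
      using dvec_le[of j i x] dist_ge_of_err_le[OF x \<mu> err \<open>i < n\<close>, of j] admissible_denom_pos[OF adm]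
      by (meson less_imp_le mult_left_mono order_trans)
  qed (use lessThan_minus_ne_empty in auto)
  then show ?thesis by (simp add: dvec_def)
qed

lemma Efun_le_of_err_le:
  assumes x: "inj_on x {..<n}" and adm: "admissible n p (Efun nv n p \<xi> x)"
    and \<mu>: "0 \<le> \<mu>" "\<mu> \<le> omega n p (Efun nv n p \<xi> x) - 1"
    and err: "\<And>i. i < n \<Longrightarrow> nv (y i - \<xi> i) \<le> \<mu> * nv (x i - \<xi> i)"
  shows "inj_on y {..<n}"
    and "Efun nv n p \<xi> y
      \<le> \<mu> / (1 - 2 * Efun nv n p \<xi> x * omega n p (Efun nv n p \<xi> x)) * Efun nv n p \<xi> x"
proof -
  define K where "K = 1 - 2 * Efun nv n p \<xi> x * omega n p (Efun nv n p \<xi> x)"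
  have "0 < K" using admissible_denom_pos[OF adm] by (simp add: K_def)
  show "inj_on y {..<n}"
  proof (rule inj_onI, rule ccontr)
    fix i j assume "i \<in> {..<n}" "j \<in> {..<n}" "y i = y j" "i \<noteq> j"
    moreover from this have "0 < K * nv (x i - x j)"
      using \<open>0 < K\<close> x by (simp add: nv_pos_iff inj_on_eq_iff)
    ultimately show False using dist_ge_of_err_le[OF x \<mu> err, of i j] nv_eq_0_iff[of 0] by (simp add: K_def)
  qed
  have "Efun nv n p \<xi> y \<le> \<mu> / K * pnorm n p (rel_err x)"
    unfolding Efun_def
  proof (rule pnorm_le_scale[OF p_ge_1 n_pos])
    fix i assume "i < n"
    have "nv (y i - \<xi> i) / dvec nv n y i \<le> (\<mu> * nv (x i - \<xi> i)) / (K * dvec nv n x i)"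
      using err[OF \<open>i < n\<close>] dvec_ge_of_err_le[OF x adm \<mu> err \<open>i < n\<close>] \<open>0 < K\<close>
        dvec_pos[OF x \<open>i < n\<close>] \<mu>(1) nv_nonneg
      by (intro frac_le) (auto simp: K_def)
    then show "\<bar>nv (y i - \<xi> i) / dvec nv n y i\<bar> \<le> \<mu> / K * \<bar>rel_err x i\<bar>"
      using nv_nonneg dvec_nonneg rel_err_nonneg by (simp add: rel_err_def)
  qed (use \<mu>(1) \<open>0 < K\<close> in simp)
  then show "Efun nv n p \<xi> y
      \<le> \<mu> / (1 - 2 * Efun nv n p \<xi> x * omega n p (Efun nv n p \<xi> x)) * Efun nv n p \<xi> x"
    by (simp add: Efun_eq_pnorm_rel_err K_def)
qed

lemma WT_step:
  assumes z: "inj_on z {..<n}" and adm: "admissible n p (Efun nv n p \<xi> z)" and "1 \<le> N"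
  shows "z \<in> WD f n N"
    and "i < n \<Longrightarrow> nv (WT f n N z i - \<xi> i) \<le> phi n p (Efun nv n p \<xi> z) ^ N * nv (z i - \<xi> i)"
    and "i < n \<Longrightarrow> nv (WT f n N z i - \<xi> i) \<le> (omega n p (Efun nv n p \<xi> z) - 1) * nv (z i - \<xi> i)"
    and "inj_on (WT f n N z) {..<n}"
    and "Efun nv n p \<xi> (WT f n N z) \<le> phi n p (Efun nv n p \<xi> z) ^ N * Efun nv n p \<xi> z"
proof -
  obtain M where N: "N = Suc M" using \<open>1 \<le> N\<close> by (cases N) auto
  let ?t = "Efun nv n p \<xi> z"
  let ?W = "omega n p ?t"
  let ?\<phi> = "phi n p ?t"
  define \<beta> where "\<beta> = (?W - 1) * ?\<phi> ^ M"
  note error = WT_error_le[OF z adm, of M]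
  have err: "nv (WT f n N z i - \<xi> i) \<le> \<beta> * nv (z i - \<xi> i)" if "i < n" for i
    using error that N by (simp add: \<beta>_def)
  have "1 \<le> ?W" using adm omega_ge_1 by (simp add: admissible_def)
  have \<phi>: "0 \<le> ?\<phi>" "?\<phi> \<le> 1" using phi_nonneg[OF adm] phi_le_1[OF adm] by simp_all
  have "0 \<le> \<beta>" "\<beta> \<le> ?W - 1"
    using \<open>1 \<le> ?W\<close> \<phi> by (simp_all add: \<beta>_def mult_left_le power_le_one)
  have "\<beta> \<le> ?\<phi> ^ N"
    using omega_minus_1_le_phi[OF adm] \<phi> by (simp add: \<beta>_def N mult_right_mono)
  show "z \<in> WD f n N" using error N by simp
  show "nv (WT f n N z i - \<xi> i) \<le> ?\<phi> ^ N * nv (z i - \<xi> i)" if "i < n"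
    using err[OF that] \<open>\<beta> \<le> ?\<phi> ^ N\<close> nv_nonneg by (meson mult_right_mono order_trans)
  show "nv (WT f n N z i - \<xi> i) \<le> (?W - 1) * nv (z i - \<xi> i)" if "i < n"
    using err[OF that] \<open>\<beta> \<le> ?W - 1\<close> nv_nonneg by (meson mult_right_mono order_trans)
  note Efun_step = Efun_le_of_err_le[OF z adm \<open>0 \<le> \<beta>\<close> \<open>\<beta> \<le> ?W - 1\<close> err]
  show "inj_on (WT f n N z) {..<n}" by (rule Efun_step(1))
  have "\<beta> / (1 - 2 * ?t * ?W) = ?\<phi> ^ N" by (simp add: \<beta>_def phi_def N mult_ac)
  then show "Efun nv n p \<xi> (WT f n N z) \<le> ?\<phi> ^ N * ?t" using Efun_step(2) by simp
qed

lemma dvec_ge_of_err_lt: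
  assumes sep: "\<And>i j. i < n \<Longrightarrow> j < n \<Longrightarrow> i \<noteq> j \<Longrightarrow> \<delta> \<le> nv (\<xi> i - \<xi> j)"
    and err: "\<And>j. j < n \<Longrightarrow> nv (x j - \<xi> j) < \<delta> / 4" and "i < n"
  shows "\<delta> / 2 \<le> dvec nv n x i"
proof -
  have "\<delta> / 2 \<le> Min ((\<lambda>l. nv (x i - x l)) ` ({..<n} - {i}))"
  proof (rule Min.boundedI)
    fix a assume "a \<in> (\<lambda>l. nv (x i - x l)) ` ({..<n} - {i})"
    then obtain l where l: "l < n" "l \<noteq> i" "a = nv (x i - x l)" by auto
    have "nv (\<xi> i - \<xi> l) \<le> nv (x i - \<xi> i) + a + nv (x l - \<xi> l)"
      using nv_triangle[of "\<xi> i" "\<xi> l" "x i"] nv_triangle[of "x i" "\<xi> l" "x l"] l(3)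
        nv_minus_commute[of "\<xi> i"] by simp
    then show "\<delta> / 2 \<le> a" using sep[OF \<open>i < n\<close> l(1)] err[OF \<open>i < n\<close>] err[OF l(1)] l(2) by simp
  qed (use lessThan_minus_ne_empty in auto)
  then show ?thesis by (simp add: dvec_def)
qed

lemma Efun_le_of_err_lt:
  assumes sep: "\<And>i j. i < n \<Longrightarrow> j < n \<Longrightarrow> i \<noteq> j \<Longrightarrow> \<delta> \<le> nv (\<xi> i - \<xi> j)"
    and err: "\<And>j. j < n \<Longrightarrow> nv (x j - \<xi> j) \<le> M" and "M < \<delta> / 4"
  shows "Efun nv n p \<xi> x \<le> 2 * M / \<delta> * pnorm n p (\<lambda>_. 1)"
  unfolding Efun_eq_pnorm_rel_err
proof (rule pnorm_le_scale[OF p_ge_1 n_pos])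
  have "0 \<le> M" using err[OF n_pos] nv_nonneg by (meson order_trans)
  then show "0 \<le> 2 * M / \<delta>" using \<open>M < \<delta> / 4\<close> by simp
  fix j assume "j < n"
  have "nv (x l - \<xi> l) < \<delta> / 4" if "l < n" for l
    using err[OF that] \<open>M < \<delta> / 4\<close> by simp
  then have "\<delta> / 2 \<le> dvec nv n x j" using dvec_ge_of_err_lt sep \<open>j < n\<close> by blast
  then have "rel_err x j \<le> M / (\<delta> / 2)"
    unfolding rel_err_def using err[OF \<open>j < n\<close>] \<open>0 \<le> M\<close> \<open>M < \<delta> / 4\<close> nv_nonneg
    by (intro frac_le) auto
  then show "\<bar>rel_err x j\<bar> \<le> 2 * M / \<delta> * \<bar>1\<bar>" using rel_err_nonneg[of x j] by (simp add: mult.commute)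
qed

end

section \<open>The iteration\<close>

lemma power_Suc_minus_1_eq:
  fixes N k :: nat
  shows "(N + 1) ^ Suc k - 1 = N * (N + 1) ^ k + ((N + 1) ^ k - 1)"
  using one_le_power[of "N + 1" k] by (simp add: algebra_simps)

locale weierstrass_iteration = weierstrass_setting +
  fixes x :: "nat \<Rightarrow> nat \<Rightarrow> 'a" and N :: nat
  assumes N_ge_1: "1 \<le> N" and inj_x0: "inj_on (x 0) {..<n}"
    and admissible_x0: "admissible n p (Efun nv n p \<xi> (x 0))"
    and x_Suc: "\<And>k. x (Suc k) = WT f n N (x k)"
begin

abbreviation E :: "nat \<Rightarrow> real" where
  "E k \<equiv> Efun nv n p \<xi> (x k)"

abbreviation lam :: real where
  "lam \<equiv> phi n p (E 0)"

abbreviation err :: "nat \<Rightarrow> nat \<Rightarrow> real" where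
  "err k i \<equiv> nv (x k i - \<xi> i)"

abbreviation max_err :: "nat \<Rightarrow> real" where
  "max_err k \<equiv> Max (err k ` {..<n})"

lemma Efun_iterate_le: "inj_on (x k) {..<n} \<and> E k \<le> lam ^ ((N + 1) ^ k - 1) * E 0"
proof (induction k)
  case (Suc k)
  define a where "a = (N + 1) ^ k"
  have "1 \<le> a" by (simp add: a_def)
  note bound = phi_power_bound[OF admissible_x0 Efun_nonneg, of "x k" "a - 1"]
  have "admissible n p (E k)" "phi n p (E k) \<le> lam ^ a"
    using bound Suc.IH \<open>1 \<le> a\<close> by (simp_all add: a_def)
  note step = WT_step[OF conjunct1[OF Suc.IH] \<open>admissible n p (E k)\<close> N_ge_1]
  have "E (Suc k) \<le> phi n p (E k) ^ N * E k" using step(5) by (simp add: x_Suc)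
  also have "\<dots> \<le> (lam ^ a) ^ N * (lam ^ (a - 1) * E 0)"
    using Suc.IH \<open>phi n p (E k) \<le> lam ^ a\<close> phi_nonneg[OF \<open>admissible n p (E k)\<close>] Efun_nonneg
    by (intro mult_mono power_mono) (auto simp: a_def)
  also have "\<dots> = lam ^ (N * a + (a - 1)) * E 0"
    by (simp only: power_add power_mult mult.commute[of N a] mult.assoc)
  also have "\<dots> = lam ^ ((N + 1) ^ Suc k - 1) * E 0"
    by (simp only: power_Suc_minus_1_eq a_def)
  finally show ?case using step(4) by (simp add: x_Suc)
qed (simp add: inj_x0)

lemma inj_iterate: "inj_on (x k) {..<n}"
  using Efun_iterate_le by blast

lemma admissible_iterate: "admissible n p (E k)"
  and phi_iterate_le: "phi n p (E k) \<le> lam ^ ((N + 1) ^ k)"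
  using phi_power_bound[OF admissible_x0 Efun_nonneg, of "x k" "(N + 1) ^ k - 1"] Efun_iterate_le
  by simp_all

lemma Efun_iterate_le_initial: "E k \<le> E 0"
proof -
  have "lam ^ ((N + 1) ^ k - 1) \<le> 1"
    using phi_nonneg[OF admissible_x0] phi_le_1[OF admissible_x0] by (simp add: power_le_one)
  then show ?thesis using Efun_iterate_le[of k] Efun_nonneg[of "x 0"]
    by (meson mult_left_le_one_le order_trans phi_nonneg[OF admissible_x0] zero_le_power)
qed

lemma x_in_WD: "x k \<in> WD f n N"
  using WT_step(1)[OF inj_iterate admissible_iterate N_ge_1] .

lemma err_Suc_le_phi: "i < n \<Longrightarrow> err (Suc k) i \<le> phi n p (E k) ^ N * err k i"
  using WT_step(2)[OF inj_iterate admissible_iterate N_ge_1] by (simp add: x_Suc)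

lemma err_Suc_le: "i < n \<Longrightarrow> err (Suc k) i \<le> lam ^ (N * (N + 1) ^ k) * err k i"
proof -
  assume "i < n"
  have "phi n p (E k) ^ N \<le> lam ^ (N * (N + 1) ^ k)"
    unfolding mult.commute[of N] power_mult
    using power_mono[OF phi_iterate_le phi_nonneg[OF admissible_iterate], of k N] .
  then show ?thesis
    using err_Suc_le_phi[OF \<open>i < n\<close>, of k] nv_nonneg by (meson mult_right_mono order_trans)
qed

lemma err_le: "i < n \<Longrightarrow> err k i \<le> lam ^ ((N + 1) ^ k - 1) * err 0 i"
proof (induction k)
  case (Suc k)
  have "err (Suc k) i \<le> lam ^ (N * (N + 1) ^ k) * (lam ^ ((N + 1) ^ k - 1) * err 0 i)"
    using err_Suc_le[OF Suc.prems, of k] Suc phi_nonneg[OF admissible_x0]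
    by (meson mult_left_mono order_trans zero_le_power)
  also have "\<dots> = lam ^ ((N + 1) ^ Suc k - 1) * err 0 i"
    by (simp only: power_Suc_minus_1_eq power_add mult.assoc)
  finally show ?case .
qed simp

lemma err_le_geometric: "i < n \<Longrightarrow> err k i \<le> (omega n p (E 0) - 1) ^ k * err 0 i"
proof (induction k)
  case (Suc k)
  have "err (Suc k) i \<le> (omega n p (E k) - 1) * err k i"
    using WT_step(3)[OF inj_iterate admissible_iterate N_ge_1 Suc.prems] by (simp add: x_Suc)
  also have "\<dots> \<le> (omega n p (E 0) - 1) * ((omega n p (E 0) - 1) ^ k * err 0 i)"
    using Suc omega_mono[OF Efun_nonneg Efun_iterate_le_initial] omega_ge_1[OF Efun_nonneg] nv_nonneg
    by (intro mult_mono) auto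
  finally show ?case by simp
qed simp

lemma err_tendsto_0: "i < n \<Longrightarrow> (\<lambda>k. err k i) \<longlonglongrightarrow> 0"
proof (rule Lim_null_comparison)
  assume "i < n"
  have "0 \<le> omega n p (E 0) - 1" "omega n p (E 0) - 1 < 1"
    using omega_ge_1[OF Efun_nonneg] admissible_omega_lt_2[OF admissible_x0] by simp_all
  then show "(\<lambda>k. (omega n p (E 0) - 1) ^ k * err 0 i) \<longlonglongrightarrow> 0"
    by (intro tendsto_mult_left_zero LIMSEQ_power_zero) simp
  show "\<forall>\<^sub>F k in sequentially. norm (err k i) \<le> (omega n p (E 0) - 1) ^ k * err 0 i"
    using err_le_geometric[OF \<open>i < n\<close>] nv_nonneg by (intro always_eventually) simp
qed

lemma err_le_max_err: "i < n \<Longrightarrow> err k i \<le> max_err k"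
  by (intro Max_ge) auto

lemma max_err_nonneg: "0 \<le> max_err k"
  using err_le_max_err[OF n_pos, of k] nv_nonneg[of "x k 0 - \<xi> 0"] by linarith

text \<open>Near the roots the components of \<open>x\<^sup>(\<^sup>k\<^sup>)\<close> stay separated, so \<open>E(x\<^sup>(\<^sup>k\<^sup>))\<close> and hence
  \<open>\<phi>(E(x\<^sup>(\<^sup>k\<^sup>)))\<close> are linear in the error; far from them \<open>\<phi> \<le> 1\<close> suffices.\<close>
lemma phi_iterate_le_max_err: "\<exists>c. \<forall>k. phi n p (E k) \<le> c * max_err k"
proof (cases "E 0 = 0")
  case True
  then have "phi n p (E k) \<le> 0 * max_err k" for k
    using phi_iterate_le[of k] by (simp add: phi_0 power_0_left)
  then show ?thesis by blast
next
  case False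
  then have "0 < E 0" using Efun_nonneg[of "x 0"] by simp
  obtain \<delta> where "0 < \<delta>" and sep: "\<And>i j. i < n \<Longrightarrow> j < n \<Longrightarrow> i \<noteq> j \<Longrightarrow> \<delta> \<le> nv (\<xi> i - \<xi> j)"
    using inj_on_imp_uniform_separation[OF roots_inj_on[OF inj_x0 admissible_x0]] by blast
  define c where "c = max (4 / \<delta>) (2 * pnorm n p (\<lambda>_. 1) * lam / (\<delta> * E 0))"
  have "phi n p (E k) \<le> c * max_err k" for k
  proof (cases "max_err k < \<delta> / 4")
    case True
    have "phi n p (E k) = phi n p (E k / E 0 * E 0)" using \<open>0 < E 0\<close> by simp
    also have "\<dots> \<le> E k / E 0 * lam"
      using \<open>0 < E 0\<close> Efun_iterate_le_initial Efun_nonneg by (intro phi_scale[OF admissible_x0]) auto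
    also have "\<dots> \<le> (2 * max_err k / \<delta> * pnorm n p (\<lambda>_. 1)) / E 0 * lam"
      using Efun_le_of_err_lt[OF sep err_le_max_err True] \<open>0 < E 0\<close> phi_nonneg[OF admissible_x0]
      by (intro mult_right_mono divide_right_mono) auto
    also have "\<dots> = 2 * pnorm n p (\<lambda>_. 1) * lam / (\<delta> * E 0) * max_err k" by simp
    also have "\<dots> \<le> c * max_err k"
      using max_err_nonneg by (intro mult_right_mono) (auto simp: c_def)
    finally show ?thesis .
  next
    case False
    then have "1 \<le> 4 / \<delta> * max_err k" using \<open>0 < \<delta>\<close> by (simp add: field_simps)
    also have "\<dots> \<le> c * max_err k" using max_err_nonneg by (intro mult_right_mono) (auto simp: c_def)
    finally show ?thesis using phi_le_1[OF admissible_iterate[of k]] by linarith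
  qed
  then show ?thesis by blast
qed

lemma err_Suc_le_max_err_power: "\<exists>C. \<forall>k. \<forall>i<n. err (Suc k) i \<le> C * max_err k ^ (N + 1)"
proof -
  obtain c where c: "\<And>k. phi n p (E k) \<le> c * max_err k"
    using phi_iterate_le_max_err by blast
  have "err (Suc k) i \<le> c ^ N * max_err k ^ (N + 1)" if "i < n" for k i
  proof -
    have "err (Suc k) i \<le> phi n p (E k) ^ N * max_err k"
      using err_Suc_le_phi[OF that] err_le_max_err[OF that] phi_nonneg[OF admissible_iterate]
      by (meson mult_left_mono order_trans zero_le_power)
    also have "\<dots> \<le> (c * max_err k) ^ N * max_err k"
      using c phi_nonneg[OF admissible_iterate] max_err_nonneg
      by (intro mult_right_mono power_mono) auto
    also have "\<dots> = c ^ N * max_err k ^ (N + 1)" by (simp add: power_mult_distrib)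
    finally show ?thesis .
  qed
  then show ?thesis by blast
qed

end

section \<open>Simple zeros\<close>

lemma infinite_UNIV_alg_closed: "infinite (UNIV :: 'a::alg_closed_field set)"
proof
  assume fin: "finite (UNIV :: 'a set)"
  define P :: "'a poly" where "P = (\<Prod>a\<in>UNIV. [:-a, 1:])"
  have "degree P = card (UNIV :: 'a set)"
    unfolding P_def by (subst degree_prod_eq_sum_degree) auto
  moreover have "card (UNIV :: 'a set) \<ge> 1" using fin by (simp add: Suc_le_eq card_gt_0_iff)
  ultimately have "degree (P + 1) > 0" by (subst degree_add_eq_left) simp_all
  then obtain z where "poly (P + 1) z = 0" using alg_closed_imp_poly_has_root by blast
  moreover have "poly P z = 0" unfolding P_def using fin by (simp add: poly_prod)
  ultimately show False by simp
qed

lemma order_linear_factor: "order a [:-b, 1:] = (if a = b then 1 else 0)"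
  using order_power_n_n[of a 1] order_0I[of "[:-b, 1:]" a] by auto

lemma order_prod_linear_factors:
  fixes \<xi> :: "nat \<Rightarrow> 'a::idom"
  shows "order a (\<Prod>i<m. [:-\<xi> i, 1:]) = card {i. i < m \<and> \<xi> i = a}"
proof (induction m)
  case (Suc m)
  have "(\<Prod>i<m. [:-\<xi> i, 1:]) \<noteq> 0" by (subst prod_zero_iff) auto
  moreover have "[:-\<xi> m, 1:] \<noteq> 0" by simp
  ultimately have "(\<Prod>i<m. [:-\<xi> i, 1:]) * [:-\<xi> m, 1:] \<noteq> 0" by (simp only: mult_eq_0_iff) blast
  then have "order a (\<Prod>i<Suc m. [:-\<xi> i, 1:]) = order a (\<Prod>i<m. [:-\<xi> i, 1:]) + order a [:-\<xi> m, 1:]"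
    by (simp only: prod.lessThan_Suc) (rule order_mult)
  also have "\<dots> = card {i. i < m \<and> \<xi> i = a} + (if a = \<xi> m then 1 else 0)"
    by (simp only: Suc.IH order_linear_factor)
  also have "\<dots> = card {i. i < Suc m \<and> \<xi> i = a}"
  proof (cases "\<xi> m = a")
    case True
    then have "{i. i < Suc m \<and> \<xi> i = a} = insert m {i. i < m \<and> \<xi> i = a}" by auto
    then show ?thesis using True by simp
  next
    case False
    then have "{i. i < Suc m \<and> \<xi> i = a} = {i. i < m \<and> \<xi> i = a}" using less_Suc_eq by auto
    then show ?thesis using False by auto
  qed
  finally show ?case .
qed simp

lemma root_vector_eq_smult_prod:
  fixes f :: "'a::alg_closed_field poly"
  assumes "degree f = n" "root_vector f n \<xi>"
  shows "f = smult (lead_coeff f) (\<Prod>i<n. [:-\<xi> i, 1:])"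
proof -
  obtain A :: "'a set" where A: "finite A" "card A = Suc n"
    using infinite_arbitrarily_large[OF infinite_UNIV_alg_closed] by blast
  have "degree (\<Prod>i<n. [:-\<xi> i, 1:]) \<le> n"
    using degree_prod_sum_le[of "{..<n}" "\<lambda>i. [:-\<xi> i, 1:]"] by simp
  then show ?thesis
    using assms A degree_smult_le[of "lead_coeff f" "\<Prod>i<n. [:-\<xi> i, 1:]"]
    by (intro poly_eqI_degree[of A]) (auto simp: root_vector_def poly_prod)
qed

lemma rsquarefree_if_inj_roots:
  fixes f :: "'a::alg_closed_field poly"
  assumes "degree f = n" "1 \<le> n" "root_vector f n \<xi>" "inj_on \<xi> {..<n}"
  shows "rsquarefree f"
proof -
  have "f \<noteq> 0" using assms(1,2) by auto
  have "order a f \<le> 1" for a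
  proof -
    have "order a f = card {i. i < n \<and> \<xi> i = a}"
      using root_vector_eq_smult_prod[OF assms(1,3)] \<open>f \<noteq> 0\<close>
      by (metis order_smult order_prod_linear_factors leading_coeff_0_iff)
    also have "\<dots> \<le> Suc 0"
      using assms(4) by (subst card_le_Suc0_iff_eq) (auto simp: inj_on_def)
    finally show ?thesis by simp
  qed
  then show ?thesis using \<open>f \<noteq> 0\<close> by (auto simp: rsquarefree_def le_Suc_eq)
qed

theorem corollary2p12:
  fixes nv :: "'a::alg_closed_field \<Rightarrow> real"
    and f :: "'a poly" and n N :: nat and p :: ereal
    and \<xi> :: "nat \<Rightarrow> 'a" and x :: "nat \<Rightarrow> nat \<Rightarrow> 'a"
  assumes nv: "abs_value nv"
    and deg: "degree f = n" and n2: "n \<ge> 2"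
    and root: "root_vector f n \<xi>"
    and N1: "N \<ge> 1" and p1: "1 \<le> p"
    and dist0: "\<forall>i<n. \<forall>j<n. i \<noteq> j \<longrightarrow> x 0 i \<noteq> x 0 j"
    and init: "Psi n p (Efun nv n p \<xi> (x 0)) \<le> 2"
    and iter: "\<forall>k. x (Suc k) = WT f n N (x k)"
  shows "rsquarefree f
    \<and> (\<forall>k. x k \<in> WD f n N)
    \<and> (\<forall>i<n. ((\<lambda>k. nv (x k i - \<xi> i)) \<longlonglongrightarrow> 0))
    \<and> (\<forall>k. \<forall>i<n. nv (x (Suc k) i - \<xi> i)
          \<le> phi n p (Efun nv n p \<xi> (x 0)) ^ (N * (N + 1) ^ k) * nv (x k i - \<xi> i))
    \<and> (\<forall>k. \<forall>i<n. nv (x k i - \<xi> i)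
          \<le> phi n p (Efun nv n p \<xi> (x 0)) ^ ((N + 1) ^ k - 1) * nv (x 0 i - \<xi> i))
    \<and> (Psi n p (Efun nv n p \<xi> (x 0)) < 2 \<longrightarrow>
        (\<exists>C. \<forall>k. \<forall>i<n. nv (x (Suc k) i - \<xi> i)
              \<le> C * (Max ((\<lambda>j. nv (x k j - \<xi> j)) ` {..<n})) ^ (N + 1)))"
proof -
  interpret weierstrass_setting nv n p f \<xi>
    using nv deg n2 root p1 by unfold_locales auto
  interpret weierstrass_iteration nv n p f \<xi> x N
    using N1 dist0 init iter Efun_nonneg by unfold_locales (auto simp: inj_on_def admissible_def)
  have "rsquarefree f"
    using rsquarefree_if_inj_roots[OF deg _ root roots_inj_on[OF inj_x0 admissible_x0]] n2 by simp
  then show ?thesis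
    using x_in_WD err_tendsto_0 err_Suc_le err_le err_Suc_le_max_err_power by blast
qed

end
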